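(* Let $(G_0,\mathfrak g)$ be a super Poincaré group. Then $\Gamma=\{p\mid\Phi_p\ge0\}$, i.e. for any $p\in\mathbb R^{1,D-1}$, $\Phi_p\ge0$ if and only if $p_0\ge0$ and $\langle p,p\rangle\ge0$. Moreover, if $p_0>0$ and $\langle p,p\rangle>0$, then $\Phi_p>0$ (positive definite).
   Context: A super Poincaré group is a super Lie group $(G_0,\mathfrak g)$ (a real Lie group $G_0$ and finite-dimensional real super Lie algebra $\mathfrak g=\mathfrak g_0\oplus\mathfrak g_1$, $\mathfrak g_0=\mathrm{Lie}(G_0)$, $G_0$ acting on $\mathfrak g$ by even automorphisms extending Ad with differential ad) with $G_0=T_0\rtimes L_0$, $T_0=\mathbb R^{1,D-1}$, $D\ge4$, $\langle x,x'\rangle=x_0x'_0-\sum_{j\ge1}x_jx'_j$, $L_0=\mathrm{Spin}(1,D-1)$ acting on $T_0$ via its covering of $\mathrm{SO}_0(1,D-1)$, $\mathfrak g_1$ a real spinorial $L_0$-module (its complexification a direct sum of complex spin representations), $T_0$ acting trivially on $\mathfrak g_1$, $[\mathfrak g_1,\mathfrak g_1]\subset\mathfrak t_0$, and $\langle[X,X],x\rangle>0$ for all $0\neq X\in\mathfrak g_1$, $x\in\Gamma^+=\{x:\langle x,x\rangle>0,x_0>0\}$. $\Gamma=\{p:\langle p,p\rangle\ge0,p_0\ge0\}$. For $p\in\mathbb R^{1,D-1}$ (identified with $T_0^\ast$ via $\langle\cdot,\cdot\rangle$), $\Phi_p(X,Y)=\frac12\langle[X,Y],p\rangle$ on $\mathfrak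 g_1$, and $\Phi_p\ge0$ means $\Phi_p(X,X)\ge0$ for all $X$. *)

theory Defs
  imports "HOL-Analysis.Analysis" "HOL-Algebra.Group"
begin

text \<open>Minkowski space R^{1,D-1} is modelled as real^('s option): the index None is the
  time coordinate x_0, the indices Some i (i :: 's) are the D-1 spatial coordinates,
  so D = CARD('s) + 1.\<close>

definition mink :: "real^('s::finite option) \<Rightarrow> real^('s option) \<Rightarrow> real" where
  "mink x y = x $ None * y $ None - (\<Sum>i\<in>UNIV. x $ Some i * y $ Some i)"

definition lorentz_group :: "(real^('s::finite option)^('s option)) set" where
  "lorentz_group = {A. \<forall>x y. mink (A *v x) (A *v y) = mink x y}"

definition SO0 :: "(real^('s::finite option)^('s option)) set" where
  "SO0 = connected_component_set lorentz_group (mat 1)"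

definition Gamma :: "(real^('s::finite option)) set" where
  "Gamma = {p. mink p p \<ge> 0 \<and> p $ None \<ge> 0}"

definition Gamma_plus :: "(real^('s::finite option)) set" where
  "Gamma_plus = {x. mink x x > 0 \<and> x $ None > 0}"

definition Phi :: "('a \<Rightarrow> 'a \<Rightarrow> real^('s::finite option)) \<Rightarrow> real^('s option) \<Rightarrow> 'a \<Rightarrow> 'a \<Rightarrow> real" where
  "Phi br p X Y = (1/2) * mink (br X Y) p"

end

theory Submission
  imports Defs
begin

(* Positivity of mink (br X X) on the open cone Gamma_plus passes to its closure Gamma, so
   Phi_p >= 0 for p in Gamma; definiteness on Gamma_plus is the positivity hypothesis itself.
   Conversely, let p lie outside Gamma and v = br X X with X nonzero, so that v lies in Gamma
   with v_0 > 0. Pick a unit spatial direction w with w.P > p_0 and w.V > -v_0 (a second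
   spatial dimension is needed for this when v is lightlike). Under the boost of rapidity s
   along w,
     mink (boost v) p = sinh s * (v_0 + w.V) * (p_0 - w.P) + O(1),
   which is negative for large s. As pi maps onto SO_0, the boost is pi g for some g, and then
   Phi_p (rho g X) (rho g X) < 0. *)

definition spatial :: "real^('s::finite option) \<Rightarrow> real^'s" where
  "spatial x = (\<chi> i. x $ Some i)"

definition spacetime :: "real \<Rightarrow> real^('s::finite) \<Rightarrow> real^('s option)" where
  "spacetime t X = (\<chi> i. case i of None \<Rightarrow> t | Some j \<Rightarrow> X $ j)"

lemma spacetime_None [simp]: "spacetime t X $ None = t"
  by (simp add: spacetime_def)

lemma spacetime_Some [simp]: "spacetime t X $ Some j = X $ j"
  by (simp add: spacetime_def)

lemma spatial_spacetime [simp]: "spatial (spacetime t X) = X"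
  by (simp add: spatial_def vec_eq_iff)

lemma spatial_add [simp]: "spatial (x + y) = spatial x + spatial y"
  by (simp add: spatial_def vec_eq_iff)

lemma spatial_scaleR [simp]: "spatial (r *\<^sub>R x) = r *\<^sub>R spatial x"
  by (simp add: spatial_def vec_eq_iff)

lemma spacetime_add: "spacetime t X + spacetime u Y = spacetime (t + u) (X + Y)"
  by (simp add: spacetime_def vec_eq_iff split: option.split)

lemma spacetime_scaleR: "r *\<^sub>R spacetime t X = spacetime (r * t) (r *\<^sub>R X)"
  by (simp add: spacetime_def vec_eq_iff split: option.split)

lemma mink_eq_time_spatial: "mink x y = x $ None * y $ None - spatial x \<bullet> spatial y"
  by (simp add: mink_def inner_vec_def spatial_def)

lemma mink_spacetime [simp]: "mink x (spacetime t X) = x $ None * t - spatial x \<bullet> X"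
  by (simp add: mink_eq_time_spatial)

lemma mink_zero_left [simp]: "mink 0 p = 0"
  by (simp add: mink_def)

lemma mink_self: "mink p p = (p $ None)\<^sup>2 - (norm (spatial p))\<^sup>2"
  by (simp add: mink_eq_time_spatial dot_square_norm power2_eq_square)

lemma Gamma_iff_norm_spatial_le: "p \<in> Gamma \<longleftrightarrow> norm (spatial p) \<le> p $ None"
  unfolding Gamma_def mink_self mem_Collect_eq
  using abs_le_square_iff[of "norm (spatial p)" "p $ None"] norm_ge_zero[of "spatial p"]
  by (smt (verit))

lemma Gamma_plus_iff_norm_spatial_less: "p \<in> Gamma_plus \<longleftrightarrow> norm (spatial p) < p $ None"
  unfolding Gamma_plus_def mink_self mem_Collect_eq
  using abs_le_square_iff[of "p $ None" "norm (spatial p)"] norm_ge_zero[of "spatial p"]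
  by (smt (verit))

lemma time_pos_if_positive_on_Gamma_plus:
  assumes "\<forall>x\<in>Gamma_plus. 0 < mink c x"
  shows "0 < c $ None"
proof -
  have "spacetime 1 0 \<in> Gamma_plus"
    by (simp add: Gamma_plus_iff_norm_spatial_less)
  with assms show ?thesis
    by fastforce
qed

lemma in_Gamma_if_positive_on_Gamma_plus:
  assumes pos: "\<forall>x\<in>Gamma_plus. 0 < mink c x"
  shows "c \<in> Gamma"
proof (rule ccontr)
  define C where "C = spatial c"
  assume "c \<notin> Gamma"
  then have C_large: "c $ None < norm C"
    by (simp add: Gamma_iff_norm_spatial_le C_def)
  moreover have "0 < c $ None"
    using pos by (rule time_pos_if_positive_on_Gamma_plus)
  ultimately have "C \<noteq> 0"
    by auto
  define x where "x = spacetime 1 ((c $ None / (norm C)\<^sup>2) *\<^sub>R C)"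
  have "x \<in> Gamma_plus"
    using C_large \<open>0 < c $ None\<close> \<open>C \<noteq> 0\<close>
    by (simp add: x_def Gamma_plus_iff_norm_spatial_less power2_eq_square divide_simps)
  moreover have "mink c x = 0"
    using \<open>C \<noteq> 0\<close> by (simp add: x_def C_def dot_square_norm)
  ultimately show False
    using pos by fastforce
qed

lemma nonneg_on_Gamma_if_positive_on_Gamma_plus:
  assumes pos: "\<forall>x\<in>Gamma_plus. 0 < mink c x" and "p \<in> Gamma"
  shows "0 \<le> mink c p"
proof (rule ccontr)
  assume neg: "\<not> 0 \<le> mink c p"
  have c0: "0 < c $ None"
    using pos by (rule time_pos_if_positive_on_Gamma_plus)
  define e where "e = - mink c p / c $ None"
  have "0 < e"
    using neg c0 by (simp add: e_def divide_neg_pos)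
  then have "spacetime (p $ None + e) (spatial p) \<in> Gamma_plus"
    using \<open>p \<in> Gamma\<close> by (simp add: Gamma_plus_iff_norm_spatial_less Gamma_iff_norm_spatial_le)
  moreover have "mink c (spacetime (p $ None + e) (spatial p)) = 0"
    using c0 by (simp add: e_def mink_eq_time_spatial field_simps)
  ultimately show False
    using pos by fastforce
qed

definition boost_map :: "real^('s::finite) \<Rightarrow> real \<Rightarrow> real^('s option) \<Rightarrow> real^('s option)" where
  "boost_map w s x =
     spacetime (cosh s * x $ None + sinh s * (w \<bullet> spatial x))
       (spatial x + ((cosh s - 1) * (w \<bullet> spatial x) + sinh s * x $ None) *\<^sub>R w)"

lemma linear_boost_map: "linear (boost_map w s)"
  by (rule linearI)
     (simp_all add: boost_map_def spacetime_add spacetime_scaleR inner_add_right algebra_simps)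

lemma boost_map_zero_rapidity: "boost_map w 0 = id"
  by (simp add: boost_map_def spacetime_def spatial_def vec_eq_iff fun_eq_iff split: option.split)

lemma mink_boost_map:
  assumes "norm w = 1"
  shows "mink (boost_map w s x) (boost_map w s y) = mink x y"
proof -
  define a b where "a = w \<bullet> spatial x" and "b = w \<bullet> spatial y"
  define \<alpha> \<beta> where "\<alpha> = (cosh s - 1) * a + sinh s * x $ None"
    and "\<beta> = (cosh s - 1) * b + sinh s * y $ None"
  have ww: "w \<bullet> w = 1"
    using assms by (simp add: dot_square_norm)
  have "mink (boost_map w s x) (boost_map w s y) =
      (cosh s * x $ None + sinh s * a) * (cosh s * y $ None + sinh s * b)
      - (spatial x \<bullet> spatial y + (\<beta> * a + \<alpha> * b + \<alpha> * \<beta>))"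
    unfolding mink_eq_time_spatial boost_map_def a_def b_def \<alpha>_def \<beta>_def
    by (simp add: inner_add_left inner_add_right ww inner_commute[of "spatial x" w] algebra_simps)
  also have "\<dots> = x $ None * y $ None - spatial x \<bullet> spatial y"
    unfolding \<alpha>_def \<beta>_def using cosh_square_eq[of s] by algebra
  finally show ?thesis
    by (simp add: mink_eq_time_spatial)
qed

lemma mink_boost_map_left:
  "mink (boost_map w s v) p =
     sinh s * ((v $ None + w \<bullet> spatial v) * (p $ None - w \<bullet> spatial p))
     + exp (- s) * (v $ None * p $ None - (w \<bullet> spatial v) * (w \<bullet> spatial p))
     + ((w \<bullet> spatial v) * (w \<bullet> spatial p) - spatial v \<bullet> spatial p)"
proof -
  have "cosh s = sinh s + exp (- s)"
    using cosh_minus_sinh[of s] by simp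
  then show ?thesis
    unfolding mink_eq_time_spatial boost_map_def
    by (simp add: inner_add_left algebra_simps)
qed

definition boost :: "real^('s::finite) \<Rightarrow> real \<Rightarrow> real^('s option)^('s option)" where
  "boost w s = matrix (boost_map w s)"

lemma boost_mult [simp]: "boost w s *v x = boost_map w s x"
  unfolding boost_def by (metis linear_boost_map matrix_vector_mul(2))

lemma boost_zero_rapidity: "boost w 0 = mat 1"
  by (simp add: boost_def boost_map_zero_rapidity matrix_id_mat_1)

lemma boost_in_lorentz_group: "norm w = 1 \<Longrightarrow> boost w s \<in> lorentz_group"
  by (simp add: lorentz_group_def mink_boost_map)

lemma continuous_on_boost: "continuous_on A (boost w)"
proof -
  have "continuous_on A (\<lambda>s. boost_map w s x $ i)" for x i
    by (cases i) (auto simp: boost_map_def intro!: continuous_intros)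
  then show ?thesis
    unfolding boost_def matrix_def by (intro continuous_on_vec_lambda)
qed

lemma boost_in_SO0:
  assumes "norm w = 1"
  shows "boost w s \<in> SO0"
proof -
  let ?path = "boost w ` closed_segment 0 s"
  have "connected ?path"
    by (intro connected_continuous_image continuous_on_boost connected_segment)
  moreover have "?path \<subseteq> lorentz_group"
    using boost_in_lorentz_group[OF assms] by auto
  moreover have "mat 1 \<in> ?path"
    by (metis boost_zero_rapidity ends_in_segment(1) image_eqI)
  moreover have "boost w s \<in> ?path"
    by simp
  ultimately show ?thesis
    unfolding SO0_def using connected_componentI by blast
qed

lemma exists_unit_vector_inner_gt:
  fixes P V :: "'a::euclidean_space"
  assumes dim: "2 \<le> DIM('a)" and P: "p0 < norm P" and V: "norm V \<le> v0" and "0 < v0"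
  obtains w where "norm w = 1" "p0 < w \<bullet> P" "- v0 < w \<bullet> V"
proof -
  obtain u :: 'a where u: "norm u = 1" "u \<bullet> P = norm P"
  proof (cases "P = 0")
    case True
    obtain b :: 'a where "b \<in> Basis"
      using nonempty_Basis by blast
    then show thesis
      using that[of b] True by simp
  next
    case False
    then show thesis
      using that[of "sgn P"] by (simp add: norm_sgn sgn_div_norm dot_square_norm power2_eq_square)
  qed
  show thesis
  proof (cases "- v0 < u \<bullet> V")
    case True
    then show thesis
      using that[of u] u P by simp
  next
    case False
    \<comment> \<open>then Cauchy-Schwarz holds with equality, so V is antiparallel to u\<close>
    have "- (u \<bullet> V) \<le> norm V"
      using norm_cauchy_schwarz[of "- u" V] u by simp
    with False V have "(- u) \<bullet> V = norm (- u) * norm V" and "norm V = v0"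
      using u by auto
    then have V_eq: "V = - v0 *\<^sub>R u"
      using norm_cauchy_schwarz_eq[of "- u" V] u by simp
    have P_eq: "P = norm P *\<^sub>R u"
      using norm_cauchy_schwarz_eq[of u P] u by simp
    obtain e0 :: 'a where "e0 \<noteq> 0" "orthogonal u e0"
      using orthogonal_to_vector_exists dim by blast
    define e where "e = sgn e0"
    have e: "norm e = 1" "u \<bullet> e = 0"
      using \<open>e0 \<noteq> 0\<close> \<open>orthogonal u e0\<close> by (simp_all add: e_def norm_sgn sgn_div_norm orthogonal_def)
    define c where "c = (1 + max 0 (p0 / norm P)) / 2"
    have c: "0 \<le> c" "c < 1" "p0 < c * norm P"
    proof -
      show "0 \<le> c"
        by (simp add: c_def)
      show "c < 1"
        using P by (cases "P = 0") (auto simp: c_def divide_less_eq)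
      show "p0 < c * norm P"
      proof (cases "p0 < 0")
        case True
        then show ?thesis
          using \<open>0 \<le> c\<close> by (smt (verit) mult_nonneg_nonneg norm_ge_zero)
      next
        case False
        then have "0 < norm P"
          using P by linarith
        then show ?thesis
          using False P by (simp add: c_def field_simps)
      qed
    qed
    define w where "w = c *\<^sub>R u + sqrt (1 - c\<^sup>2) *\<^sub>R e"
    have uu: "u \<bullet> u = 1" and ee: "e \<bullet> e = 1"
      using u e by (simp_all add: dot_square_norm)
    have "c * c \<le> 1"
      using c by (simp add: mult_le_one)
    then have "w \<bullet> w = c\<^sup>2 + (1 - c\<^sup>2)"
      using e uu ee
      by (simp add: w_def inner_add_left inner_add_right inner_commute[of e u] power2_eq_square)
    then have "norm w = 1"
      by (simp add: norm_eq_sqrt_inner)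
    moreover have "w \<bullet> P = c * norm P"
      by (subst P_eq) (simp add: w_def inner_add_left uu inner_commute[of e u] e)
    moreover have "w \<bullet> V = - v0 * c"
      by (simp add: V_eq w_def inner_add_left uu inner_commute[of e u] e)
    ultimately show thesis
      using that c \<open>0 < v0\<close> by simp
  qed
qed

lemma exists_SO0_mink_neg:
  fixes c p :: "real^('s::finite option)"
  assumes dim: "2 \<le> CARD('s)" and pos: "\<forall>x\<in>Gamma_plus. 0 < mink c x" and "p \<notin> Gamma"
  obtains \<Lambda> where "\<Lambda> \<in> SO0" "mink (\<Lambda> *v c) p < 0"
proof -
  have "0 < c $ None"
    using pos by (rule time_pos_if_positive_on_Gamma_plus)
  moreover have "norm (spatial c) \<le> c $ None"
    using in_Gamma_if_positive_on_Gamma_plus[OF pos] by (simp add: Gamma_iff_norm_spatial_le)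
  moreover have "p $ None < norm (spatial p)"
    using \<open>p \<notin> Gamma\<close> by (simp add: Gamma_iff_norm_spatial_le)
  ultimately obtain w where w: "norm w = 1" "p $ None < w \<bullet> spatial p" "- c $ None < w \<bullet> spatial c"
    using exists_unit_vector_inner_gt[of "p $ None" "spatial p" "spatial c" "c $ None"] dim by auto
  define A where "A = c $ None * p $ None - (w \<bullet> spatial c) * (w \<bullet> spatial p)"
  define B where "B = (w \<bullet> spatial c) * (w \<bullet> spatial p) - spatial c \<bullet> spatial p"
  define d where "d = (c $ None + w \<bullet> spatial c) * (w \<bullet> spatial p - p $ None)"
  have "0 < d"
    using w by (simp add: d_def)
  define s where "s = arsinh ((\<bar>A\<bar> + \<bar>B\<bar> + 1) / d)"
  have "0 < s" and sinh_s: "sinh s * d = \<bar>A\<bar> + \<bar>B\<bar> + 1"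
    using \<open>0 < d\<close> by (simp_all add: s_def)
  have "exp (- s) * A \<le> exp (- s) * \<bar>A\<bar>"
    by (simp add: mult_left_mono)
  also have "\<dots> \<le> \<bar>A\<bar>"
    using \<open>0 < s\<close> by (simp add: mult_left_le_one_le)
  finally have "exp (- s) * A \<le> \<bar>A\<bar>" .
  have "mink (boost w s *v c) p = - (sinh s * d) + exp (- s) * A + B"
    by (simp add: mink_boost_map_left A_def B_def d_def algebra_simps)
  also have "\<dots> < 0"
    using sinh_s \<open>exp (- s) * A \<le> \<bar>A\<bar>\<close> abs_ge_self[of B] by linarith
  finally show thesis
    using that boost_in_SO0[OF w(1)] by blast
qed

lemma nonneg_on_invariant_set_iff_Gamma:
  fixes K :: "(real^('s::finite option)) set"
  assumes dim: "2 \<le> CARD('s)"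
    and pos: "\<And>c x. c \<in> K \<Longrightarrow> c \<noteq> 0 \<Longrightarrow> x \<in> Gamma_plus \<Longrightarrow> 0 < mink c x"
    and invariant: "\<And>\<Lambda> c. \<Lambda> \<in> SO0 \<Longrightarrow> c \<in> K \<Longrightarrow> \<Lambda> *v c \<in> K"
    and "c0 \<in> K" "c0 \<noteq> 0"
  shows "(\<forall>c\<in>K. 0 \<le> mink c p) \<longleftrightarrow> p \<in> Gamma"
proof
  assume nonneg: "\<forall>c\<in>K. 0 \<le> mink c p"
  show "p \<in> Gamma"
  proof (rule ccontr)
    assume "p \<notin> Gamma"
    moreover have "\<forall>x\<in>Gamma_plus. 0 < mink c0 x"
      using pos \<open>c0 \<in> K\<close> \<open>c0 \<noteq> 0\<close> by blast
    ultimately obtain \<Lambda> where "\<Lambda> \<in> SO0" "mink (\<Lambda> *v c0) p < 0"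
      using exists_SO0_mink_neg dim by metis
    with nonneg invariant \<open>c0 \<in> K\<close> show False
      by (meson not_le)
  qed
next
  assume "p \<in> Gamma"
  then show "\<forall>c\<in>K. 0 \<le> mink c p"
    using pos nonneg_on_Gamma_if_positive_on_Gamma_plus by (metis mink_zero_left order.refl)
qed

theorem lemma3p3p4:
  fixes L :: "('l, 'm) monoid_scheme"
    and pi :: "'l \<Rightarrow> real^('s::finite option)^('s option)"
    and rho :: "'l \<Rightarrow> 'a::euclidean_space \<Rightarrow> 'a"
    and br :: "'a \<Rightarrow> 'a \<Rightarrow> real^('s option)"
  assumes D: "CARD('s) + 1 \<ge> 4"
    and L_group: "group L"
    and pi_into: "\<And>g. g \<in> carrier L \<Longrightarrow> pi g \<in> SO0"
    and pi_mult: "\<And>g h. g \<in> carrier L \<Longrightarrow> h \<in> carrier L \<Longrightarrow> pi (g \<otimes>\<^bsub>L\<^esub> h) = pi g ** pi h"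
    and pi_onto: "pi ` carrier L = SO0"
    and rho_lin: "\<And>g. g \<in> carrier L \<Longrightarrow> linear (rho g) \<and> bij (rho g)"
    and rho_mult: "\<And>g h. g \<in> carrier L \<Longrightarrow> h \<in> carrier L \<Longrightarrow> rho (g \<otimes>\<^bsub>L\<^esub> h) = rho g \<circ> rho h"
    and rho_one: "rho \<one>\<^bsub>L\<^esub> = id"
    and br_bil: "bilinear br"
    and br_sym: "\<And>X Y. br X Y = br Y X"
    and br_equiv: "\<And>g X Y. g \<in> carrier L \<Longrightarrow> br (rho g X) (rho g Y) = pi g *v br X Y"
    and br_pos: "\<And>X x. X \<noteq> 0 \<Longrightarrow> x \<in> Gamma_plus \<Longrightarrow> mink (br X X) x > 0"
  shows "(\<forall>p. (\<forall>X. Phi br p X X \<ge> 0) \<longleftrightarrow> (p $ None \<ge> 0 \<and> mink p p \<ge> 0))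
         \<and> (\<forall>p. p $ None > 0 \<and> mink p p > 0 \<longrightarrow> (\<forall>X. X \<noteq> 0 \<longrightarrow> Phi br p X X > 0))"
proof -
  define K where "K = range (\<lambda>X. br X X)"
  have br_zero: "br 0 0 = 0"
    by (rule bilinear_lzero[OF br_bil])
  have pos: "0 < mink c x" if "c \<in> K" "c \<noteq> 0" "x \<in> Gamma_plus" for c x
    using that br_zero by (force simp: K_def intro: br_pos)
  have invariant: "\<Lambda> *v c \<in> K" if "\<Lambda> \<in> SO0" "c \<in> K" for \<Lambda> c
  proof -
    obtain g where "g \<in> carrier L" "pi g = \<Lambda>"
      using \<open>\<Lambda> \<in> SO0\<close> pi_onto by (metis imageE)
    moreover obtain X where "c = br X X"
      using \<open>c \<in> K\<close> by (auto simp: K_def)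
    ultimately have "\<Lambda> *v c = br (rho g X) (rho g X)"
      by (simp add: br_equiv)
    then show ?thesis
      by (simp add: K_def)
  qed
  obtain X0 :: 'a where "X0 \<in> Basis"
    using nonempty_Basis by blast
  then have "0 < mink (br X0 X0) (spacetime 1 0)"
    by (intro br_pos nonzero_Basis) (simp_all add: Gamma_plus_iff_norm_spatial_less)
  then have "br X0 X0 \<noteq> 0" "br X0 X0 \<in> K"
    by (auto simp: K_def)
  then have "(\<forall>c\<in>K. 0 \<le> mink c p) \<longleftrightarrow> p \<in> Gamma" for p
    using nonneg_on_invariant_set_iff_Gamma[OF _ pos invariant] D by simp
  moreover have "(\<forall>X. 0 \<le> Phi br p X X) \<longleftrightarrow> (\<forall>c\<in>K. 0 \<le> mink c p)" for p
    by (simp add: K_def Phi_def)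
  moreover have "0 < Phi br p X X" if "p \<in> Gamma_plus" "X \<noteq> 0" for p X
    using br_pos that by (simp add: Phi_def)
  ultimately show ?thesis
    unfolding Gamma_def Gamma_plus_def mem_Collect_eq by blast
qed

end
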